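(* Let $X_1,\ldots,X_m$ ($m\ge 2$) be real-valued square integrable random variables on a common probability space, $\mathbf{X}=(X_1,\ldots,X_m)$. Then the partial linear mean impact $\iota^{lin}_{X_1\mid X_2,\ldots,X_m}$ is free of confounding (with respect to $X_2,\ldots,X_m$) if and only if $E(X_1\mid X_2,\ldots,X_m)$ is (almost surely) a linear function $\beta_0+\sum_{j=2}^m\beta_jX_j$ of $X_2,\ldots,X_m$.
   Context: With $\mathcal{H}^{lin}_1=\{\delta(\mathbf{X})=\eta_0+\sum_{j=1}^m\eta_jX_j:\ E[\delta(\mathbf{X})]=0,\ E[\delta^2(\mathbf{X})]=1,\ E[X_j\delta(\mathbf{X})]=0\ \text{for all } j\ge 2\}$, the partial linear mean impact of $X_1$ on a square integrable random variable $Y$ is $\iota^{lin}_{X_1\mid X_2,\ldots,X_m}(Y)=\sup_{\delta(\mathbf{X})\in\mathcal{H}^{lin}_1}E[Y\delta(\mathbf{X})]$. This parameter is called free of confounding (with respect to $X_2,\ldots,X_m$) if $\iota^{lin}_{X_1\mid X_2,\ldots,X_m}(Y)=0$ for every square integrable random variable $Y$ such that $E(Y\mid\mathbf{X})=g(X_2,\ldots,X_m)$ for some measurable square integrable $g:\mathbb{R}^{m-1}\to\mathbb{R}$ (i.e. $E(Y\mid\mathbf{X})$ is measurable with respect to the $\sigma$-algebra generated by $X_2,\ldots,X_m$). *)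

theory Defs
  imports "HOL-Probability.Probability"
begin

definition sq_integrable :: "'a measure \<Rightarrow> ('a \<Rightarrow> real) \<Rightarrow> bool" where
  "sq_integrable M Y \<longleftrightarrow> Y \<in> borel_measurable M \<and> integrable M (\<lambda>\<omega>. (Y \<omega>)^2)"

definition lin_comb :: "(nat \<Rightarrow> 'a \<Rightarrow> real) \<Rightarrow> nat \<Rightarrow> (nat \<Rightarrow> real) \<Rightarrow> 'a \<Rightarrow> real" where
  "lin_comb X m \<eta> = (\<lambda>\<omega>. \<eta> 0 + (\<Sum>j = 1..m. \<eta> j * X j \<omega>))"

definition H_lin :: "'a measure \<Rightarrow> (nat \<Rightarrow> 'a \<Rightarrow> real) \<Rightarrow> nat \<Rightarrow> ('a \<Rightarrow> real) set" where
  "H_lin M X m = {\<delta>. \<exists>\<eta>. \<delta> = lin_comb X m \<eta>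
      \<and> (\<integral>\<omega>. \<delta> \<omega> \<partial>M) = 0
      \<and> (\<integral>\<omega>. (\<delta> \<omega>)^2 \<partial>M) = 1
      \<and> (\<forall>j\<in>{2..m}. (\<integral>\<omega>. X j \<omega> * \<delta> \<omega> \<partial>M) = 0)}"

definition partial_lin_mean_impact ::
    "'a measure \<Rightarrow> (nat \<Rightarrow> 'a \<Rightarrow> real) \<Rightarrow> nat \<Rightarrow> ('a \<Rightarrow> real) \<Rightarrow> real" where
  "partial_lin_mean_impact M X m Y =
     (if H_lin M X m = {} then 0
      else Sup ((\<lambda>\<delta>. \<integral>\<omega>. Y \<omega> * \<delta> \<omega> \<partial>M) ` H_lin M X m))"

definition sigma_gen :: "'a measure \<Rightarrow> (nat \<Rightarrow> 'a \<Rightarrow> real) \<Rightarrow> nat set \<Rightarrow> 'a measure" where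
  "sigma_gen M X I = vimage_algebra (space M) (\<lambda>\<omega>. \<lambda>j\<in>I. X j \<omega>) (\<Pi>\<^sub>M j\<in>I. borel)"

definition free_of_confounding :: "'a measure \<Rightarrow> (nat \<Rightarrow> 'a \<Rightarrow> real) \<Rightarrow> nat \<Rightarrow> bool" where
  "free_of_confounding M X m \<longleftrightarrow>
    (\<forall>Y. sq_integrable M Y \<and>
       (\<exists>g \<in> borel_measurable (\<Pi>\<^sub>M j\<in>{2..m}. borel).
          integrable M (\<lambda>\<omega>. (g (\<lambda>j\<in>{2..m}. X j \<omega>))^2) \<and>
          (AE \<omega> in M. real_cond_exp M (sigma_gen M X {1..m}) Y \<omega> = g (\<lambda>j\<in>{2..m}. X j \<omega>)))
     \<longrightarrow> partial_lin_mean_impact M X m Y = 0)"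

end

theory Submission
  imports Defs
begin

(* With U the residual of the best linear predictor of X\<^sub>1 from 1, X\<^sub>2, ..., X\<^sub>m, every \<delta> in
   H_lin is almost surely a multiple of U, so the partial linear mean impact of Y is
   |E[Y U]| / \<Parallel>U\<Parallel>.  If E(X\<^sub>1 | X\<^sub>2, ..., X\<^sub>m) is linear, it is that predictor, so U is orthogonal
   to every square integrable function of X\<^sub>2, ..., X\<^sub>m, and hence to every Y whose conditional
   expectation given X is such a function.  Conversely, indicators of events in \<sigma>(X\<^sub>2, ..., X\<^sub>m)
   are such Y; freedom of confounding makes U orthogonal to all of them, which characterises
   the predictor as the conditional expectation. *)

definition inner_L2 :: "'a measure \<Rightarrow> ('a \<Rightarrow> real) \<Rightarrow> ('a \<Rightarrow> real) \<Rightarrow> real" where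
  "inner_L2 M f g = (\<integral>x. f x * g x \<partial>M)"

definition affine_comb :: "(nat \<Rightarrow> 'a \<Rightarrow> real) \<Rightarrow> nat set \<Rightarrow> (nat \<Rightarrow> real) \<Rightarrow> 'a \<Rightarrow> real" where
  "affine_comb Z J \<beta> = (\<lambda>x. \<beta> 0 + (\<Sum>j\<in>J. \<beta> j * Z j x))"

lemma borel_measurable_affine_comb:
  assumes "\<And>j. j \<in> J \<Longrightarrow> Z j \<in> borel_measurable N"
  shows "affine_comb Z J \<beta> \<in> borel_measurable N"
  unfolding affine_comb_def using assms by measurable

lemma sq_integrable_imp_measurable: "sq_integrable M f \<Longrightarrow> f \<in> borel_measurable M"
  unfolding sq_integrable_def by simp

lemma integrable_mult_sq_integrable:
  assumes "sq_integrable M f" "sq_integrable M g"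
  shows "integrable M (\<lambda>x. f x * g x)"
proof (rule Bochner_Integration.integrable_bound)
  show "integrable M (\<lambda>x. (f x)\<^sup>2 + (g x)\<^sup>2)" using assms unfolding sq_integrable_def by auto
  show "(\<lambda>x. f x * g x) \<in> borel_measurable M" using assms unfolding sq_integrable_def by auto
  have "norm (f x * g x) \<le> norm ((f x)\<^sup>2 + (g x)\<^sup>2)" for x
  proof -
    have "2 * (\<bar>f x\<bar> * \<bar>g x\<bar>) \<le> (f x)\<^sup>2 + (g x)\<^sup>2"
      using sum_squares_bound[of "\<bar>f x\<bar>" "\<bar>g x\<bar>"] by (simp add: mult.assoc)
    moreover have "0 \<le> \<bar>f x\<bar> * \<bar>g x\<bar>" by simp
    ultimately have "\<bar>f x\<bar> * \<bar>g x\<bar> \<le> (f x)\<^sup>2 + (g x)\<^sup>2" by linarith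
    then show ?thesis by (simp add: abs_mult)
  qed
  then show "AE x in M. norm (f x * g x) \<le> norm ((f x)\<^sup>2 + (g x)\<^sup>2)" by simp
qed

lemma sq_integrable_add:
  assumes "sq_integrable M f" "sq_integrable M g"
  shows "sq_integrable M (\<lambda>x. f x + g x)"
proof -
  have "integrable M (\<lambda>x. (f x)\<^sup>2 + (g x)\<^sup>2 + 2 * f x * g x)"
    using integrable_mult_sq_integrable[OF assms] assms unfolding sq_integrable_def
    by (auto simp: mult.assoc)
  then show ?thesis using assms unfolding sq_integrable_def by (simp add: power2_sum borel_measurable_add)
qed

lemma sq_integrable_cmult:
  assumes "sq_integrable M f"
  shows "sq_integrable M (\<lambda>x. c * f x)"
  using assms unfolding sq_integrable_def by (simp add: power_mult_distrib borel_measurable_times)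

lemma sq_integrable_diff:
  assumes "sq_integrable M f" "sq_integrable M g"
  shows "sq_integrable M (\<lambda>x. f x - g x)"
  using sq_integrable_add[OF assms(1) sq_integrable_cmult[OF assms(2), of "-1"]] by simp

lemma sq_integrable_sum:
  assumes "\<And>j. j \<in> J \<Longrightarrow> sq_integrable M (f j)"
  shows "sq_integrable M (\<lambda>x. \<Sum>j\<in>J. f j x)"
  using assms
proof (induction J rule: infinite_finite_induct)
  case (insert k J)
  then show ?case using sq_integrable_add[of M "f k" "\<lambda>x. \<Sum>j\<in>J. f j x"] by simp
qed (simp_all add: sq_integrable_def)

context finite_measure
begin

lemma sq_integrable_imp_integrable: "sq_integrable M f \<Longrightarrow> integrable M f"
  unfolding sq_integrable_def using square_integrable_imp_integrable by blast

lemma sq_integrable_const: "sq_integrable M (\<lambda>x. c)"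
  unfolding sq_integrable_def by auto

lemma sq_integrable_indicator:
  assumes "A \<in> sets M"
  shows "sq_integrable M (indicator A)"
proof -
  have "(\<lambda>x. (indicator A x)\<^sup>2 :: real) = indicator A" by (auto simp: indicator_def)
  then show ?thesis
    using assms unfolding sq_integrable_def by (simp add: less_top[symmetric])
qed

lemma sq_integrable_affine_comb:
  assumes "\<And>j. j \<in> J \<Longrightarrow> sq_integrable M (Z j)"
  shows "sq_integrable M (affine_comb Z J \<beta>)"
  unfolding affine_comb_def
  by (intro sq_integrable_add sq_integrable_const sq_integrable_sum sq_integrable_cmult assms)

end

lemma inner_L2_commute: "inner_L2 M f g = inner_L2 M g f"
  unfolding inner_L2_def by (simp add: mult.commute)

lemma inner_L2_cmult_left: "inner_L2 M (\<lambda>x. c * f x) g = c * inner_L2 M f g"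
  unfolding inner_L2_def by (simp add: mult.assoc)

lemma inner_L2_add_left:
  assumes "sq_integrable M f" "sq_integrable M g" "sq_integrable M h"
  shows "inner_L2 M (\<lambda>x. f x + g x) h = inner_L2 M f h + inner_L2 M g h"
  unfolding inner_L2_def
  using integrable_mult_sq_integrable[OF assms(1,3)] integrable_mult_sq_integrable[OF assms(2,3)]
  by (simp add: distrib_right)

lemma inner_L2_diff_left:
  assumes "sq_integrable M f" "sq_integrable M g" "sq_integrable M h"
  shows "inner_L2 M (\<lambda>x. f x - g x) h = inner_L2 M f h - inner_L2 M g h"
  unfolding inner_L2_def
  using integrable_mult_sq_integrable[OF assms(1,3)] integrable_mult_sq_integrable[OF assms(2,3)]
  by (simp add: left_diff_distrib)

lemma inner_L2_sum_left:
  assumes "\<And>j. j \<in> J \<Longrightarrow> sq_integrable M (f j)" "sq_integrable M h"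
  shows "inner_L2 M (\<lambda>x. \<Sum>j\<in>J. f j x) h = (\<Sum>j\<in>J. inner_L2 M (f j) h)"
  unfolding inner_L2_def sum_distrib_right
  using assms by (subst Bochner_Integration.integral_sum) (auto intro: integrable_mult_sq_integrable)

lemma inner_L2_indicator_right: "inner_L2 M f (indicator A) = (\<integral>x\<in>A. f x \<partial>M)"
  unfolding inner_L2_def set_lebesgue_integral_def by (simp add: mult.commute)

lemma inner_L2_self_nonneg: "0 \<le> inner_L2 M f f"
  unfolding inner_L2_def by simp

lemma AE_eq_0_if_inner_L2_self_eq_0:
  assumes "sq_integrable M f" "inner_L2 M f f = 0"
  shows "AE x in M. f x = 0"
proof -
  have "(\<integral>x. (f x)\<^sup>2 \<partial>M) = 0" using assms(2) unfolding inner_L2_def by (simp add: power2_eq_square)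
  then have "AE x in M. (f x)\<^sup>2 = 0"
    using assms(1) unfolding sq_integrable_def by (subst (asm) integral_nonneg_eq_0_iff_AE) auto
  then show ?thesis by auto
qed

lemma inner_L2_eq_0_if_AE_eq_0: "AE x in M. f x = 0 \<Longrightarrow> inner_L2 M f g = 0"
  unfolding inner_L2_def by (auto intro!: integral_eq_zero_AE)

lemma inner_L2_cong_AE:
  assumes "AE x in M. f x = f' x" "AE x in M. g x = g' x"
    and "f \<in> borel_measurable M" "f' \<in> borel_measurable M"
    and "g \<in> borel_measurable M" "g' \<in> borel_measurable M"
  shows "inner_L2 M f g = inner_L2 M f' g'"
  unfolding inner_L2_def using assms by (intro integral_cong_AE) auto

lemma (in finite_measure) inner_L2_affine_comb_left:
  assumes "\<And>j. j \<in> J \<Longrightarrow> sq_integrable M (Z j)" "sq_integrable M h"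
  shows "inner_L2 M (affine_comb Z J \<beta>) h
     = \<beta> 0 * (\<integral>x. h x \<partial>M) + (\<Sum>j\<in>J. \<beta> j * inner_L2 M (Z j) h)"
proof -
  have "inner_L2 M (affine_comb Z J \<beta>) h
      = inner_L2 M (\<lambda>x. \<beta> 0) h + inner_L2 M (\<lambda>x. \<Sum>j\<in>J. \<beta> j * Z j x) h"
    unfolding affine_comb_def
    by (intro inner_L2_add_left sq_integrable_const sq_integrable_sum sq_integrable_cmult assms)
  also have "inner_L2 M (\<lambda>x. \<Sum>j\<in>J. \<beta> j * Z j x) h = (\<Sum>j\<in>J. inner_L2 M (\<lambda>x. \<beta> j * Z j x) h)"
    by (intro inner_L2_sum_left sq_integrable_cmult assms)
  finally show ?thesis by (simp add: inner_L2_cmult_left inner_L2_def)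
qed

section \<open>Orthogonal projection onto a finite span\<close>

lemma orthogonalize_step:
  assumes "sq_integrable M W" "sq_integrable M V"
  obtains t where "inner_L2 M (\<lambda>x. W x - t * V x) V = 0"
proof (cases "inner_L2 M V V = 0")
  case True
  then have "inner_L2 M V W = 0"
    using AE_eq_0_if_inner_L2_self_eq_0[OF assms(2)] inner_L2_eq_0_if_AE_eq_0 by blast
  then have "inner_L2 M (\<lambda>x. W x - 0 * V x) V = 0" by (simp add: inner_L2_commute)
  then show ?thesis by (rule that)
next
  case False
  define t where "t = inner_L2 M W V / inner_L2 M V V"
  have "inner_L2 M (\<lambda>x. W x - t * V x) V = inner_L2 M W V - t * inner_L2 M V V"
    using assms by (simp add: inner_L2_diff_left sq_integrable_cmult inner_L2_cmult_left)
  also have "\<dots> = 0" using False by (simp add: t_def)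
  finally show ?thesis by (rule that)
qed

lemma orthogonal_projection_exists:
  assumes "finite J" "\<And>j. j \<in> J \<Longrightarrow> sq_integrable M (Z j)" "sq_integrable M W"
  shows "\<exists>c. \<forall>i\<in>J. inner_L2 M (\<lambda>x. W x - (\<Sum>j\<in>J. c j * Z j x)) (Z i) = 0"
  using assms
proof (induction J arbitrary: W rule: finite_induct)
  case (insert k J)
  have Z: "\<And>j. j \<in> J \<Longrightarrow> sq_integrable M (Z j)" "sq_integrable M (Z k)"
    using insert.prems by auto
  obtain c where c: "\<forall>i\<in>J. inner_L2 M (\<lambda>x. W x - (\<Sum>j\<in>J. c j * Z j x)) (Z i) = 0"
    using insert.IH[OF Z(1) insert.prems(2)] by blast
  obtain d where d: "\<forall>i\<in>J. inner_L2 M (\<lambda>x. Z k x - (\<Sum>j\<in>J. d j * Z j x)) (Z i) = 0"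
    using insert.IH[OF Z] by blast
  define W' where "W' = (\<lambda>x. W x - (\<Sum>j\<in>J. c j * Z j x))"
  (* Gram-Schmidt: V is the component of Z\<^sub>k orthogonal to the Z\<^sub>j, j \<in> J *)
  define V where "V = (\<lambda>x. Z k x - (\<Sum>j\<in>J. d j * Z j x))"
  have sq_W': "sq_integrable M W'" unfolding W'_def
    by (intro sq_integrable_diff sq_integrable_sum sq_integrable_cmult Z insert.prems)
  have sq_V: "sq_integrable M V" unfolding V_def
    by (intro sq_integrable_diff sq_integrable_sum sq_integrable_cmult Z)
  obtain t where t: "inner_L2 M (\<lambda>x. W' x - t * V x) V = 0"
    using orthogonalize_step[OF sq_W' sq_V] .
  define R where "R = (\<lambda>x. W' x - t * V x)"
  have sq_R: "sq_integrable M R" unfolding R_def by (intro sq_integrable_diff sq_integrable_cmult sq_W' sq_V)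
  have R_J: "inner_L2 M R (Z i) = 0" if "i \<in> J" for i
  proof -
    have "inner_L2 M R (Z i) = inner_L2 M W' (Z i) - t * inner_L2 M V (Z i)"
      unfolding R_def using sq_W' sq_V that Z
      by (simp add: inner_L2_diff_left sq_integrable_cmult inner_L2_cmult_left)
    then show ?thesis using c d that unfolding W'_def V_def by simp
  qed
  have "inner_L2 M (Z k) R = inner_L2 M (\<lambda>x. V x + (\<Sum>j\<in>J. d j * Z j x)) R"
    by (simp add: V_def)
  also have "\<dots> = inner_L2 M V R + (\<Sum>j\<in>J. d j * inner_L2 M (Z j) R)"
    using insert.hyps(1) Z sq_V sq_R
    by (simp add: inner_L2_add_left inner_L2_sum_left sq_integrable_sum sq_integrable_cmult
        inner_L2_cmult_left)
  also have "\<dots> = 0"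
    using t R_J unfolding R_def[symmetric] by (simp add: inner_L2_commute[of M _ R])
  finally have R_k: "inner_L2 M R (Z k) = 0" by (simp add: inner_L2_commute)
  let ?c = "\<lambda>j. if j = k then t else c j - t * d j"
  have "R x = W x - (\<Sum>j\<in>insert k J. ?c j * Z j x)" for x
  proof -
    have "(\<Sum>j\<in>J. ?c j * Z j x) = (\<Sum>j\<in>J. c j * Z j x - t * (d j * Z j x))"
      using insert.hyps(2) by (intro sum.cong) (auto simp: algebra_simps)
    also have "\<dots> = (\<Sum>j\<in>J. c j * Z j x) - t * (\<Sum>j\<in>J. d j * Z j x)"
      by (simp add: sum_subtractf sum_distrib_left)
    finally have "(\<Sum>j\<in>J. ?c j * Z j x) = (\<Sum>j\<in>J. c j * Z j x) - t * (\<Sum>j\<in>J. d j * Z j x)" .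
    then show ?thesis
      using insert.hyps by (simp add: R_def W'_def V_def algebra_simps)
  qed
  then have "R = (\<lambda>x. W x - (\<Sum>j\<in>insert k J. ?c j * Z j x))" by blast
  then show ?case using R_J R_k by (intro exI[of _ ?c]) auto
qed simp

lemma (in finite_measure) affine_projection_exists:
  assumes "finite J" "0 \<notin> J" "\<And>j. j \<in> J \<Longrightarrow> sq_integrable M (Z j)" "sq_integrable M W"
  obtains \<beta> where "(\<integral>x. W x - affine_comb Z J \<beta> x \<partial>M) = 0"
    and "\<And>i. i \<in> J \<Longrightarrow> inner_L2 M (Z i) (\<lambda>x. W x - affine_comb Z J \<beta> x) = 0"
proof -
  define Z' where "Z' = Z(0 := (\<lambda>_. 1))"
  have "\<exists>c. \<forall>i\<in>insert 0 J. inner_L2 M (\<lambda>x. W x - (\<Sum>j\<in>insert 0 J. c j * Z' j x)) (Z' i) = 0"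
    using assms sq_integrable_const by (intro orthogonal_projection_exists) (auto simp: Z'_def)
  then obtain c where c: "\<forall>i\<in>insert 0 J. inner_L2 M (\<lambda>x. W x - (\<Sum>j\<in>insert 0 J. c j * Z' j x)) (Z' i) = 0"
    by blast
  have "(\<Sum>j\<in>insert 0 J. c j * Z' j x) = affine_comb Z J c x" for x
  proof -
    have "(\<Sum>j\<in>J. c j * Z' j x) = (\<Sum>j\<in>J. c j * Z j x)"
      using assms(2) by (intro sum.cong) (auto simp: Z'_def)
    then show ?thesis using assms(1,2) by (simp add: affine_comb_def Z'_def)
  qed
  then have c': "\<forall>i\<in>insert 0 J. inner_L2 M (\<lambda>x. W x - affine_comb Z J c x) (Z' i) = 0"
    using c by simp
  show ?thesis
  proof (rule that)
    show "(\<integral>x. W x - affine_comb Z J c x \<partial>M) = 0"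
      using c' by (simp add: Z'_def inner_L2_def)
    show "inner_L2 M (Z i) (\<lambda>x. W x - affine_comb Z J c x) = 0" if "i \<in> J" for i
      using bspec[OF c' insertI2[OF that]] that assms(2)
      by (auto simp: Z'_def inner_L2_commute split: if_splits)
  qed
qed

section \<open>\<sigma>-algebras generated by families of random variables\<close>

lemma space_sigma_gen [simp]: "space (sigma_gen M X I) = space M"
  by (simp add: sigma_gen_def)

lemma measurable_sigma_gen_tuple:
  "(\<lambda>\<omega>. \<lambda>j\<in>I. X j \<omega>) \<in> measurable (sigma_gen M X I) (\<Pi>\<^sub>M j\<in>I. borel)"
  unfolding sigma_gen_def by (rule measurable_vimage_algebra1) (auto simp: space_PiM)

lemma measurable_sigma_gen_comp:
  "g \<in> borel_measurable (\<Pi>\<^sub>M j\<in>I. borel) \<Longrightarrow>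
    (\<lambda>\<omega>. g (\<lambda>j\<in>I. X j \<omega>)) \<in> borel_measurable (sigma_gen M X I)"
  using measurable_compose[OF measurable_sigma_gen_tuple] by blast

lemma measurable_sigma_gen_component:
  assumes "j \<in> I"
  shows "X j \<in> borel_measurable (sigma_gen M X I)"
proof -
  have "(\<lambda>\<omega>. (\<lambda>j\<in>I. X j \<omega>) j) \<in> borel_measurable (sigma_gen M X I)"
    using measurable_compose[OF measurable_sigma_gen_tuple measurable_component_singleton[OF assms]] .
  then show ?thesis using assms by simp
qed

lemma sets_sigma_gen_subset:
  assumes "space N = space M" "\<And>j. j \<in> I \<Longrightarrow> X j \<in> borel_measurable N"
  shows "sets (sigma_gen M X I) \<subseteq> sets N"
proof -
  have "(\<lambda>\<omega>. \<lambda>j\<in>I. X j \<omega>) \<in> measurable N (\<Pi>\<^sub>M j\<in>I. borel)"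
    by (rule measurable_restrict) (rule assms(2))
  then show ?thesis unfolding sigma_gen_def by (rule sets_image_in_sets[OF assms(1)])
qed

lemma sets_sigma_gen_mono: "I \<subseteq> K \<Longrightarrow> sets (sigma_gen M X I) \<subseteq> sets (sigma_gen M X K)"
  by (rule sets_sigma_gen_subset) (auto intro: measurable_sigma_gen_component)

lemma sets_sigma_gen_obtain:
  assumes "A \<in> sets (sigma_gen M X I)"
  obtains B where "B \<in> sets (\<Pi>\<^sub>M j\<in>I. borel)" "A = (\<lambda>\<omega>. \<lambda>j\<in>I. X j \<omega>) -` B \<inter> space M"
proof -
  have "(\<lambda>\<omega>. \<lambda>j\<in>I. X j \<omega>) \<in> space M \<rightarrow> space (\<Pi>\<^sub>M j\<in>I. (borel :: real measure))"
    by (auto simp: space_PiM)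
  then show ?thesis
    using assms that unfolding sigma_gen_def by (auto simp: sets_vimage_algebra2)
qed

lemma (in finite_measure) sigma_finite_subalgebra_sigma_gen:
  assumes "\<And>j. j \<in> I \<Longrightarrow> X j \<in> borel_measurable M"
  shows "sigma_finite_subalgebra M (sigma_gen M X I)"
proof (rule finite_measure_subalgebra_is_sigma_finite)
  have "subalgebra M (sigma_gen M X I)"
    unfolding subalgebra_def using sets_sigma_gen_subset[OF refl assms] by simp
  then show "finite_measure_subalgebra M (sigma_gen M X I)"
    unfolding finite_measure_subalgebra_def finite_measure_subalgebra_axioms_def
    using finite_measure_axioms by blast
qed

section \<open>The best linear predictor and the partial linear mean impact\<close>

locale sq_integrable_regressors = prob_space M
  for M :: "'a measure" and X :: "nat \<Rightarrow> 'a \<Rightarrow> real" and m :: nat +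
  assumes two_le_m: "2 \<le> m"
    and sq_integrable_X: "j \<in> {1..m} \<Longrightarrow> sq_integrable M (X j)"
begin

abbreviation "sigma_all \<equiv> sigma_gen M X {1..m}"
abbreviation "sigma_cov \<equiv> sigma_gen M X {2..m}"

definition residual :: "(nat \<Rightarrow> real) \<Rightarrow> 'a \<Rightarrow> real" where
  "residual \<beta> = (\<lambda>x. X 1 x - affine_comb X {2..m} \<beta> x)"

(* The normal equations of the L\<^sup>2-projection of X\<^sub>1 onto the span of 1, X\<^sub>2, ..., X\<^sub>m. *)
definition best_linear_predictor :: "(nat \<Rightarrow> real) \<Rightarrow> bool" where
  "best_linear_predictor \<beta> \<longleftrightarrow>
     (\<integral>x. residual \<beta> x \<partial>M) = 0 \<and> (\<forall>j\<in>{2..m}. inner_L2 M (X j) (residual \<beta>) = 0)"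

lemma sq_integrable_X_cov: "j \<in> {2..m} \<Longrightarrow> sq_integrable M (X j)"
  by (rule sq_integrable_X) auto

lemma sq_integrable_X_1: "sq_integrable M (X 1)"
  using two_le_m by (intro sq_integrable_X) auto

lemma sq_integrable_residual: "sq_integrable M (residual \<beta>)"
  unfolding residual_def
  by (intro sq_integrable_diff sq_integrable_X_1 sq_integrable_affine_comb sq_integrable_X_cov)

lemma sq_integrable_lin_comb: "sq_integrable M (lin_comb X m \<eta>)"
  unfolding lin_comb_def
  by (intro sq_integrable_add sq_integrable_const sq_integrable_sum sq_integrable_cmult sq_integrable_X)

lemma lin_comb_split:
  "lin_comb X m \<eta> = (\<lambda>x. \<eta> 1 * residual \<beta> x + affine_comb X {2..m} (\<lambda>j. \<eta> j + \<eta> 1 * \<beta> j) x)"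
proof
  fix x
  have "{1..m} = insert 1 {2..m}" using two_le_m by auto
  then have "lin_comb X m \<eta> x = \<eta> 0 + \<eta> 1 * X 1 x + (\<Sum>j=2..m. \<eta> j * X j x)"
    by (simp add: lin_comb_def)
  moreover have "(\<Sum>j=2..m. (\<eta> j + \<eta> 1 * \<beta> j) * X j x)
      = (\<Sum>j=2..m. \<eta> j * X j x) + \<eta> 1 * (\<Sum>j=2..m. \<beta> j * X j x)"
    by (simp add: algebra_simps sum.distrib sum_distrib_left)
  ultimately show "lin_comb X m \<eta> x
      = \<eta> 1 * residual \<beta> x + affine_comb X {2..m} (\<lambda>j. \<eta> j + \<eta> 1 * \<beta> j) x"
    by (simp add: residual_def affine_comb_def algebra_simps)
qed

lemma inner_L2_affine_comb_cov_eq_0: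
  assumes "sq_integrable M f" "(\<integral>x. f x \<partial>M) = 0" "\<forall>j\<in>{2..m}. inner_L2 M (X j) f = 0"
  shows "inner_L2 M (affine_comb X {2..m} \<gamma>) f = 0"
  using inner_L2_affine_comb_left[where Z = X and J = "{2..m}" and h = f and \<beta> = \<gamma>]
    sq_integrable_X_cov assms by simp

lemma best_linear_predictor_exists:
  obtains \<beta> where "best_linear_predictor \<beta>"
proof (rule affine_projection_exists[where J = "{2..m}" and Z = X and W = "X 1"])
  fix \<beta>
  assume "(\<integral>x. X 1 x - affine_comb X {2..m} \<beta> x \<partial>M) = 0"
    and "\<And>i. i \<in> {2..m} \<Longrightarrow> inner_L2 M (X i) (\<lambda>x. X 1 x - affine_comb X {2..m} \<beta> x) = 0"
  then show thesis by (intro that[of \<beta>]) (simp add: best_linear_predictor_def residual_def)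
qed (use sq_integrable_X_1 in \<open>simp_all add: sq_integrable_X_cov\<close>)

lemma H_lin_AE_eq_multiple_residual:
  assumes \<beta>: "best_linear_predictor \<beta>" and \<delta>: "\<delta> \<in> H_lin M X m"
  obtains c where "AE x in M. \<delta> x = c * residual \<beta> x"
proof -
  obtain \<eta> where \<delta>_eq: "\<delta> = lin_comb X m \<eta>" and \<delta>_mean: "(\<integral>x. \<delta> x \<partial>M) = 0"
      and \<delta>_orth: "\<forall>j\<in>{2..m}. inner_L2 M (X j) \<delta> = 0"
    using \<delta> unfolding H_lin_def inner_L2_def by blast
  define r where "r = affine_comb X {2..m} (\<lambda>j. \<eta> j + \<eta> 1 * \<beta> j)"
  have \<delta>_split: "\<delta> = (\<lambda>x. \<eta> 1 * residual \<beta> x + r x)"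
    unfolding \<delta>_eq r_def by (rule lin_comb_split)
  have sq_\<delta>: "sq_integrable M \<delta>" unfolding \<delta>_eq by (rule sq_integrable_lin_comb)
  have sq_r: "sq_integrable M r" unfolding r_def by (intro sq_integrable_affine_comb sq_integrable_X_cov)
  have r_\<delta>: "inner_L2 M r \<delta> = 0"
    unfolding r_def using sq_\<delta> \<delta>_mean \<delta>_orth by (rule inner_L2_affine_comb_cov_eq_0)
  have r_U: "inner_L2 M r (residual \<beta>) = 0"
    unfolding r_def using sq_integrable_residual \<beta> unfolding best_linear_predictor_def
    by (intro inner_L2_affine_comb_cov_eq_0) auto
  have "r = (\<lambda>x. \<delta> x - \<eta> 1 * residual \<beta> x)" using \<delta>_split by auto
  then have "inner_L2 M r r = inner_L2 M \<delta> r - \<eta> 1 * inner_L2 M (residual \<beta>) r"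
    using sq_\<delta> sq_r sq_integrable_residual
    by (simp add: inner_L2_diff_left sq_integrable_cmult inner_L2_cmult_left)
  also have "\<dots> = 0" using r_\<delta> r_U by (simp add: inner_L2_commute)
  finally have "AE x in M. r x = 0" by (rule AE_eq_0_if_inner_L2_self_eq_0[OF sq_r])
  then show ?thesis using \<delta>_split by (intro that[of "\<eta> 1"]) auto
qed

lemma scaled_residual_in_H_lin:
  assumes \<beta>: "best_linear_predictor \<beta>"
    and c: "c\<^sup>2 * inner_L2 M (residual \<beta>) (residual \<beta>) = 1"
  shows "(\<lambda>x. c * residual \<beta> x) \<in> H_lin M X m"
proof -
  define \<eta> where "\<eta> j = (if j = 1 then c else - c * \<beta> j)" for j
  have "affine_comb X {2..m} (\<lambda>j. \<eta> j + \<eta> 1 * \<beta> j) = (\<lambda>x. 0)"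
    unfolding affine_comb_def \<eta>_def by (auto intro!: sum.neutral)
  then have "lin_comb X m \<eta> = (\<lambda>x. c * residual \<beta> x)"
    unfolding lin_comb_split[of \<eta> \<beta>] by (simp add: \<eta>_def)
  moreover have "(\<integral>x. c * residual \<beta> x \<partial>M) = 0"
    using \<beta> by (simp add: best_linear_predictor_def)
  moreover have "(\<integral>x. (c * residual \<beta> x)\<^sup>2 \<partial>M) = 1"
    using c by (simp add: inner_L2_def power_mult_distrib flip: power2_eq_square)
  moreover have "\<forall>j\<in>{2..m}. (\<integral>x. X j x * (c * residual \<beta> x) \<partial>M) = 0"
    using \<beta> by (simp add: best_linear_predictor_def inner_L2_def mult.left_commute)
  ultimately show ?thesis unfolding H_lin_def by (intro CollectI exI[of _ \<eta>]) auto
qed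

lemma inner_L2_H_lin_eq_pm_residual:
  assumes \<beta>: "best_linear_predictor \<beta>" and \<delta>: "\<delta> \<in> H_lin M X m" and Y: "sq_integrable M Y"
  defines "s \<equiv> sqrt (inner_L2 M (residual \<beta>) (residual \<beta>))"
  shows "0 < s"
    and "inner_L2 M Y \<delta> = inner_L2 M Y (residual \<beta>) / s
      \<or> inner_L2 M Y \<delta> = - (inner_L2 M Y (residual \<beta>) / s)"
proof -
  let ?U = "residual \<beta>"
  obtain c where c: "AE x in M. \<delta> x = c * ?U x"
    using H_lin_AE_eq_multiple_residual[OF \<beta> \<delta>] .
  have meas: "\<delta> \<in> borel_measurable M" "(\<lambda>x. c * ?U x) \<in> borel_measurable M"
    "Y \<in> borel_measurable M"
    using \<delta> sq_integrable_lin_comb sq_integrable_residual[THEN sq_integrable_cmult] Y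
    by (auto simp: H_lin_def intro: sq_integrable_imp_measurable)
  have "1 = inner_L2 M \<delta> \<delta>"
    using \<delta> by (auto simp: H_lin_def inner_L2_def power2_eq_square)
  also have "\<dots> = inner_L2 M (\<lambda>x. c * ?U x) (\<lambda>x. c * ?U x)"
    using c meas by (intro inner_L2_cong_AE) auto
  also have "\<dots> = (\<bar>c\<bar> * s)\<^sup>2"
    unfolding s_def using inner_L2_self_nonneg[of M ?U]
    by (simp add: inner_L2_def power_mult_distrib power2_eq_square mult_ac)
  finally have "(\<bar>c\<bar> * s)\<^sup>2 = 1" by simp
  moreover have "0 \<le> \<bar>c\<bar> * s" by (simp add: s_def inner_L2_self_nonneg)
  ultimately have cs: "\<bar>c\<bar> * s = 1" by (auto simp: power2_eq_1_iff)
  then have "s \<noteq> 0" by auto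
  then show "0 < s" using inner_L2_self_nonneg[of M ?U] by (simp add: s_def less_le)
  have "inner_L2 M Y \<delta> = inner_L2 M Y (\<lambda>x. c * ?U x)"
    using c meas by (intro inner_L2_cong_AE) auto
  also have "\<dots> = c * inner_L2 M Y ?U"
    by (simp add: inner_L2_commute[of M Y] inner_L2_cmult_left)
  finally have Y_\<delta>: "inner_L2 M Y \<delta> = c * inner_L2 M Y ?U" .
  have "c = 1 / s \<or> c = - (1 / s)"
    using cs \<open>0 < s\<close>
    by (metis abs_of_nonneg abs_of_neg eq_divide_eq less_irrefl linorder_not_le minus_minus)
  then show "inner_L2 M Y \<delta> = inner_L2 M Y ?U / s \<or> inner_L2 M Y \<delta> = - (inner_L2 M Y ?U / s)"
    unfolding Y_\<delta> by auto
qed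

theorem partial_lin_mean_impact_eq:
  assumes \<beta>: "best_linear_predictor \<beta>" and Y: "sq_integrable M Y"
  shows "partial_lin_mean_impact M X m Y
    = \<bar>inner_L2 M Y (residual \<beta>)\<bar> / sqrt (inner_L2 M (residual \<beta>) (residual \<beta>))"
proof (cases "inner_L2 M (residual \<beta>) (residual \<beta>) = 0")
  case True
  (* H_lin is empty, and the right-hand side divides by zero *)
  then have "H_lin M X m = {}" using inner_L2_H_lin_eq_pm_residual(1)[OF \<beta> _ Y] by fastforce
  then show ?thesis using True by (simp add: partial_lin_mean_impact_def)
next
  case False
  let ?U = "residual \<beta>"
  define s where "s = sqrt (inner_L2 M ?U ?U)"
  define a where "a = inner_L2 M Y ?U / s"
  have "0 < s" using False inner_L2_self_nonneg[of M ?U] by (simp add: s_def less_le)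
  then have "c\<^sup>2 * inner_L2 M ?U ?U = 1" if "c = 1 / s \<or> c = - (1 / s)" for c
    using that inner_L2_self_nonneg[of M ?U] by (auto simp: s_def power_divide)
  then have in_H: "(\<lambda>x. c * ?U x) \<in> H_lin M X m" if "c = 1 / s \<or> c = - (1 / s)" for c
    using that \<beta> by (blast intro: scaled_residual_in_H_lin)
  have "(\<lambda>\<delta>. inner_L2 M Y \<delta>) ` H_lin M X m = {a, - a}"
  proof
    show "(\<lambda>\<delta>. inner_L2 M Y \<delta>) ` H_lin M X m \<subseteq> {a, - a}"
      using inner_L2_H_lin_eq_pm_residual(2)[OF \<beta> _ Y] by (auto simp: a_def s_def)
    have "c * inner_L2 M Y ?U \<in> (\<lambda>\<delta>. inner_L2 M Y \<delta>) ` H_lin M X m"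
      if "c = 1 / s \<or> c = - (1 / s)" for c
    proof (rule image_eqI[OF _ in_H[OF that]])
      show "c * inner_L2 M Y ?U = inner_L2 M Y (\<lambda>x. c * ?U x)"
        by (simp only: inner_L2_commute[of M Y] inner_L2_cmult_left)
    qed
    then show "{a, - a} \<subseteq> (\<lambda>\<delta>. inner_L2 M Y \<delta>) ` H_lin M X m"
      unfolding a_def by (metis (no_types) empty_subsetI insert_subsetI divide_inverse
        inverse_eq_divide mult.commute mult_minus_left)
  qed
  moreover have "Sup {a, - a} = \<bar>a\<bar>"
    by (rule cSup_eq_maximum) (auto simp: abs_if)
  ultimately show ?thesis
    using in_H[of "1 / s"] \<open>0 < s\<close>
    unfolding partial_lin_mean_impact_def inner_L2_def[symmetric]
    by (auto simp: a_def s_def abs_div)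
qed

lemma sets_sigma_all_subset: "sets sigma_all \<subseteq> sets M"
  using sq_integrable_X by (intro sets_sigma_gen_subset) (auto intro: sq_integrable_imp_measurable)

lemma sets_sigma_cov_subset: "sets sigma_cov \<subseteq> sets sigma_all"
  by (rule sets_sigma_gen_mono) auto

lemma sigma_finite_subalgebra_sigma_all: "sigma_finite_subalgebra M sigma_all"
  using sq_integrable_X by (intro sigma_finite_subalgebra_sigma_gen) (auto intro: sq_integrable_imp_measurable)

lemma sigma_finite_subalgebra_sigma_cov: "sigma_finite_subalgebra M sigma_cov"
  using sq_integrable_X_cov
  by (intro sigma_finite_subalgebra_sigma_gen) (auto intro: sq_integrable_imp_measurable)

lemma borel_measurable_affine_comb_sigma_cov: "affine_comb X {2..m} \<beta> \<in> borel_measurable sigma_cov"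
  by (intro borel_measurable_affine_comb measurable_sigma_gen_component)

lemma borel_measurable_residual_sigma_all: "residual \<beta> \<in> borel_measurable sigma_all"
  unfolding residual_def using two_le_m
  by (intro borel_measurable_diff borel_measurable_affine_comb measurable_sigma_gen_component) auto

lemma inner_L2_residual_eq_0_if_cond_exp:
  assumes ce: "AE x in M. real_cond_exp M sigma_cov (X 1) x = affine_comb X {2..m} \<beta> x"
    and f: "sq_integrable M f" "f \<in> borel_measurable sigma_cov"
  shows "inner_L2 M f (residual \<beta>) = 0"
proof -
  interpret C: sigma_finite_subalgebra M sigma_cov by (rule sigma_finite_subalgebra_sigma_cov)
  let ?a = "affine_comb X {2..m} \<beta>"
  have sq_a: "sq_integrable M ?a" by (intro sq_integrable_affine_comb sq_integrable_X_cov)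
  have "inner_L2 M f (X 1) = inner_L2 M f (real_cond_exp M sigma_cov (X 1))"
    unfolding inner_L2_def using f sq_integrable_X_1
    by (intro C.real_cond_exp_intg(2)[symmetric] integrable_mult_sq_integrable)
      (auto intro: sq_integrable_imp_measurable)
  also have "\<dots> = inner_L2 M f ?a"
    using ce f(1) sq_a borel_measurable_cond_exp2
    by (intro inner_L2_cong_AE) (auto intro: sq_integrable_imp_measurable)
  finally show ?thesis
    using f(1) sq_integrable_X_1 sq_a
    by (simp add: residual_def inner_L2_commute[of M f] inner_L2_diff_left)
qed

lemma best_linear_predictor_if_cond_exp:
  assumes "AE x in M. real_cond_exp M sigma_cov (X 1) x = affine_comb X {2..m} \<beta> x"
  shows "best_linear_predictor \<beta>"
proof -
  have "inner_L2 M (\<lambda>_. 1) (residual \<beta>) = 0"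
    using assms sq_integrable_const by (rule inner_L2_residual_eq_0_if_cond_exp) simp
  moreover have "inner_L2 M (X j) (residual \<beta>) = 0" if "j \<in> {2..m}" for j
    using assms sq_integrable_X_cov[OF that] measurable_sigma_gen_component[OF that]
    by (rule inner_L2_residual_eq_0_if_cond_exp)
  ultimately show ?thesis by (simp add: best_linear_predictor_def inner_L2_def)
qed

lemma cond_exp_eq_if_residual_orthogonal:
  assumes "\<And>A. A \<in> sets sigma_cov \<Longrightarrow> inner_L2 M (indicator A) (residual \<beta>) = 0"
  shows "AE x in M. real_cond_exp M sigma_cov (X 1) x = affine_comb X {2..m} \<beta> x"
proof -
  interpret C: sigma_finite_subalgebra M sigma_cov by (rule sigma_finite_subalgebra_sigma_cov)
  let ?a = "affine_comb X {2..m} \<beta>"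
  have sq_a: "sq_integrable M ?a" by (intro sq_integrable_affine_comb sq_integrable_X_cov)
  show ?thesis
  proof (rule C.real_cond_exp_charact)
    fix A assume A: "A \<in> sets sigma_cov"
    then have "sq_integrable M (indicator A)"
      using sets_sigma_cov_subset sets_sigma_all_subset by (intro sq_integrable_indicator) auto
    then have "inner_L2 M (X 1) (indicator A) - inner_L2 M ?a (indicator A) = 0"
      using assms[OF A] sq_integrable_X_1 sq_a
      by (simp add: residual_def inner_L2_commute[of M "indicator A"] inner_L2_diff_left)
    then show "(\<integral>x\<in>A. X 1 x \<partial>M) = (\<integral>x\<in>A. ?a x \<partial>M)"
      by (simp add: inner_L2_indicator_right)
  qed (use sq_integrable_X_1 sq_a borel_measurable_affine_comb_sigma_cov in
    \<open>auto intro: sq_integrable_imp_integrable\<close>)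
qed

lemma free_of_confounding_if_linear_cond_exp:
  assumes ce: "AE x in M. real_cond_exp M sigma_cov (X 1) x = affine_comb X {2..m} \<beta> x"
  shows "free_of_confounding M X m"
  unfolding free_of_confounding_def
proof (intro allI impI, elim conjE bexE)
  fix Y g
  assume Y: "sq_integrable M Y" and g: "g \<in> borel_measurable (\<Pi>\<^sub>M j\<in>{2..m}. borel)"
    and g_sq: "integrable M (\<lambda>\<omega>. (g (\<lambda>j\<in>{2..m}. X j \<omega>))\<^sup>2)"
    and Y_ce: "AE \<omega> in M. real_cond_exp M sigma_all Y \<omega> = g (\<lambda>j\<in>{2..m}. X j \<omega>)"
  interpret A: sigma_finite_subalgebra M sigma_all by (rule sigma_finite_subalgebra_sigma_all)
  define h where "h \<omega> = g (\<lambda>j\<in>{2..m}. X j \<omega>)" for \<omega>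
  have h_cov: "h \<in> borel_measurable sigma_cov"
    unfolding h_def using g by (rule measurable_sigma_gen_comp)
  have h_sq: "sq_integrable M h"
    using g_sq measurable_from_subalg[OF sigma_finite_subalgebra.subalg h_cov]
      sigma_finite_subalgebra_sigma_cov
    by (simp add: sq_integrable_def h_def)
  have U: "sq_integrable M (residual \<beta>)" "residual \<beta> \<in> borel_measurable sigma_all"
    by (rule sq_integrable_residual borel_measurable_residual_sigma_all)+
  have "inner_L2 M (residual \<beta>) Y = inner_L2 M (residual \<beta>) (real_cond_exp M sigma_all Y)"
    unfolding inner_L2_def using U Y
    by (intro A.real_cond_exp_intg(2)[symmetric] integrable_mult_sq_integrable)
      (auto intro: sq_integrable_imp_measurable)
  also have "\<dots> = inner_L2 M (residual \<beta>) h"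
    using Y_ce U h_sq borel_measurable_cond_exp2
    by (intro inner_L2_cong_AE) (auto simp: h_def intro: sq_integrable_imp_measurable)
  also have "\<dots> = 0"
    using inner_L2_residual_eq_0_if_cond_exp[OF ce h_sq h_cov] by (simp add: inner_L2_commute)
  finally show "partial_lin_mean_impact M X m Y = 0"
    using partial_lin_mean_impact_eq[OF best_linear_predictor_if_cond_exp[OF ce] Y]
    by (simp add: inner_L2_commute)
qed

lemma partial_lin_mean_impact_indicator_eq_0:
  assumes foc: "free_of_confounding M X m" and A: "A \<in> sets sigma_cov"
  shows "partial_lin_mean_impact M X m (indicator A) = 0"
proof -
  interpret A: sigma_finite_subalgebra M sigma_all by (rule sigma_finite_subalgebra_sigma_all)
  obtain B where B: "B \<in> sets (\<Pi>\<^sub>M j\<in>{2..m}. borel)"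
    and A_eq: "A = (\<lambda>\<omega>. \<lambda>j\<in>{2..m}. X j \<omega>) -` B \<inter> space M"
    using A by (rule sets_sigma_gen_obtain)
  have ind: "indicator A \<omega> = (indicator B (\<lambda>j\<in>{2..m}. X j \<omega>) :: real)" if "\<omega> \<in> space M" for \<omega>
    using that by (simp add: A_eq indicator_def)
  have A_all: "A \<in> sets sigma_all" using A sets_sigma_cov_subset by auto
  have sq: "sq_integrable M (indicator A)"
    using A_all sets_sigma_all_subset by (intro sq_integrable_indicator) auto
  have "AE \<omega> in M. real_cond_exp M sigma_all (indicator A) \<omega> = indicator A \<omega>"
    using sq A_all by (intro A.real_cond_exp_F_meas sq_integrable_imp_integrable) auto
  then have "AE \<omega> in M. real_cond_exp M sigma_all (indicator A) \<omega> = indicator B (\<lambda>j\<in>{2..m}. X j \<omega>)"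
    using AE_space by eventually_elim (simp add: ind)
  moreover have "integrable M (\<lambda>\<omega>. (indicator B (\<lambda>j\<in>{2..m}. X j \<omega>) :: real)\<^sup>2)"
    using sq unfolding sq_integrable_def
    by (subst Bochner_Integration.integrable_cong[OF refl, where g = "\<lambda>\<omega>. (indicator A \<omega>)\<^sup>2"])
      (simp_all add: ind)
  ultimately have "sq_integrable M (indicator A) \<and>
      (\<exists>g \<in> borel_measurable (\<Pi>\<^sub>M j\<in>{2..m}. borel).
          integrable M (\<lambda>\<omega>. (g (\<lambda>j\<in>{2..m}. X j \<omega>))\<^sup>2) \<and>
          (AE \<omega> in M. real_cond_exp M sigma_all (indicator A) \<omega> = g (\<lambda>j\<in>{2..m}. X j \<omega>)))"
    using sq borel_measurable_indicator[OF B] by (intro conjI bexI[of _ "indicator B"])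
  from foc[unfolded free_of_confounding_def, rule_format, OF this] show ?thesis .
qed

lemma linear_cond_exp_if_free_of_confounding:
  assumes foc: "free_of_confounding M X m"
  obtains \<beta> where "AE x in M. real_cond_exp M sigma_cov (X 1) x = affine_comb X {2..m} \<beta> x"
proof -
  obtain \<beta> where \<beta>: "best_linear_predictor \<beta>" by (rule best_linear_predictor_exists)
  have "inner_L2 M (indicator A) (residual \<beta>) = 0" if A: "A \<in> sets sigma_cov" for A
  proof (cases "inner_L2 M (residual \<beta>) (residual \<beta>) = 0")
    case True
    then have "AE x in M. residual \<beta> x = 0"
      by (rule AE_eq_0_if_inner_L2_self_eq_0[OF sq_integrable_residual])
    then show ?thesis by (subst inner_L2_commute) (rule inner_L2_eq_0_if_AE_eq_0)
  next
    case False
    have "sq_integrable M (indicator A)"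
      using A sets_sigma_cov_subset sets_sigma_all_subset by (intro sq_integrable_indicator) auto
    then show ?thesis
      using partial_lin_mean_impact_eq[OF \<beta>] partial_lin_mean_impact_indicator_eq_0[OF foc A]
        False inner_L2_self_nonneg[of M "residual \<beta>"]
      by simp
  qed
  then show ?thesis by (rule that[OF cond_exp_eq_if_residual_orthogonal])
qed

end

theorem mainTheorem4:
  fixes M :: "'a measure" and X :: "nat \<Rightarrow> 'a \<Rightarrow> real" and m :: nat
  assumes "prob_space M"
    and "m \<ge> 2"
    and "\<forall>j\<in>{1..m}. sq_integrable M (X j)"
  shows "free_of_confounding M X m \<longleftrightarrow>
    (\<exists>\<beta> :: nat \<Rightarrow> real. AE \<omega> in M.
       real_cond_exp M (sigma_gen M X {2..m}) (X 1) \<omega> = \<beta> 0 + (\<Sum>j = 2..m. \<beta> j * X j \<omega>))"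
proof -
  interpret sq_integrable_regressors M X m
    using assms by (intro sq_integrable_regressors.intro sq_integrable_regressors_axioms.intro) auto
  show ?thesis
  proof
    assume "free_of_confounding M X m"
    then obtain \<beta> where "AE \<omega> in M. real_cond_exp M sigma_cov (X 1) \<omega> = affine_comb X {2..m} \<beta> \<omega>"
      by (rule linear_cond_exp_if_free_of_confounding)
    then show "\<exists>\<beta>. AE \<omega> in M. real_cond_exp M sigma_cov (X 1) \<omega> = \<beta> 0 + (\<Sum>j = 2..m. \<beta> j * X j \<omega>)"
      unfolding affine_comb_def by blast
  next
    assume "\<exists>\<beta>. AE \<omega> in M. real_cond_exp M sigma_cov (X 1) \<omega> = \<beta> 0 + (\<Sum>j = 2..m. \<beta> j * X j \<omega>)"
    then obtain \<beta> where "AE \<omega> in M. real_cond_exp M sigma_cov (X 1) \<omega> = affine_comb X {2..m} \<beta> \<omega>"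
      unfolding affine_comb_def by blast
    then show "free_of_confounding M X m" by (rule free_of_confounding_if_linear_cond_exp)
  qed
qed

end
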